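(* Let $m\geq 7$ be an integer. Then for every prime $p$ of the form $p=4m^2n+1$ with $n$ a positive integer, we have $d_m(\mathbb{Z}/p\mathbb{Z})\geq \frac18\left(1-\frac1p\right)$. In particular, $d_m\geq\frac18$.
   Context: For a positive integer $m$, a subset $A$ of an abelian group is $m$-sum-free if there is no triple $(x,y,z)\in A^3$ with $x+y=mz$. For a prime $p$, $d_m(\mathbb{Z}/p\mathbb{Z})=\max\{|A|/p : A\subseteq \mathbb{Z}/p\mathbb{Z}\ \text{is } m\text{-sum-free}\}$. For $m\ge 3$ it is known (from prior work) that $d_m(\mathbb{Z}/p\mathbb{Z})$ converges as $p\to\infty$ through primes; $d_m$ denotes this limit. *)

theory Defs
  imports Complex_Main "HOL-Computational_Algebra.Primes"
begin

text \<open>Elements of Z/pZ are represented by the residues 0..p-1 (as naturals).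
  A subset A of Z/pZ is m-sum-free if there is no triple (x,y,z) in A^3 with
  x + y = m z in Z/pZ.\<close>

definition m_sum_free_mod :: "nat \<Rightarrow> nat \<Rightarrow> nat set \<Rightarrow> bool" where
  "m_sum_free_mod m p A \<longleftrightarrow>
     A \<subseteq> {..<p} \<and>
     (\<forall>x\<in>A. \<forall>y\<in>A. \<forall>z\<in>A. (x + y) mod p \<noteq> (m * z) mod p)"

definition d_mod :: "nat \<Rightarrow> nat \<Rightarrow> real" where
  "d_mod m p = Max ((\<lambda>A. real (card A) / real p) ` {A. m_sum_free_mod m p A})"

definition primes_at_top :: "nat filter" where
  "primes_at_top = inf sequentially (principal {p. prime p})"

end

theory Submission
  imports Defs
begin

text \<open>
  Write \<open>p = m g + e\<close> with \<open>e < m\<close> and let \<open>A\<close> be the union of the \<open>r + 1\<close> translates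
  \<open>[c\<^sub>0, c\<^sub>0 + t] + g k\<close>, \<open>k \<le> r\<close>. Since \<open>m g \<equiv> -e (mod p)\<close>, we have
  \<open>m (c + g k) \<equiv> m c - e k\<close>, and for a suitable start \<open>c\<^sub>0\<close> these residues lie, as
  integers, strictly between \<open>x + y\<close> and \<open>x + y + p\<close> for all \<open>x, y \<in> A\<close>; so \<open>A\<close> is
  \<open>m\<close>-sum-free. Taking \<open>r + 1 = \<lfloor>(m + 2)/4\<rfloor>\<close> and \<open>t\<close> as large as these constraints allow
  gives \<open>8 |A| > p\<close> as soon as \<open>p \<ge> m\<^sup>4\<close>, or \<open>p \<equiv> 1 (mod m)\<close> and \<open>p \<ge> 4 m\<^sup>2\<close>.
  The latter covers \<open>p = 4 m\<^sup>2 n + 1\<close> (with room to spare: the bound obtained is \<open>1/8\<close>),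
  the former bounds the limit along the primes.
\<close>

definition interval_translates :: "nat \<Rightarrow> nat \<Rightarrow> nat \<Rightarrow> nat \<Rightarrow> nat set" where
  "interval_translates g c0 t r = (\<lambda>(c, k). c + g * k) ` ({c0..c0 + t} \<times> {..r})"

lemma card_interval_translates:
  assumes "t < g"
  shows "card (interval_translates g c0 t r) = (t + 1) * (r + 1)"
proof -
  have "inj_on (\<lambda>(c, k). c + g * k) ({c0..c0 + t} \<times> {..r})"
  proof (rule inj_onI, clarify)
    fix c k c' k'
    assume c: "c \<in> {c0..c0 + t}" and c': "c' \<in> {c0..c0 + t}"
      and eq: "c + g * k = c' + g * k'"
    have "(c - c0) + g * k = (c' - c0) + g * k'" using c c' eq by auto
    moreover have "c - c0 < g" "c' - c0 < g" using c c' assms by auto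
    ultimately have "c - c0 = c' - c0 \<and> k = k'"
      by (metis add.commute add_right_cancel mod_mult_self2 mod_less mult_cancel_left
          gr_implies_not0)
    then show "c = c' \<and> k = k'" using c c' by auto
  qed
  then show ?thesis
    unfolding interval_translates_def by (simp add: card_image card_cartesian_product)
qed

lemma m_sum_free_interval_translates:
  fixes m p g e c0 t r :: nat
  assumes m4: "4 \<le> m" and p: "m * g + e = p"
    and sums_below: "2 * c0 + 2 * t + (2 * g + e) * r < m * c0"
    and multiples_below: "m * (c0 + t) < 2 * c0 + p"
  shows "m_sum_free_mod m p (interval_translates g c0 t r)"
  unfolding m_sum_free_mod_def
proof (intro conjI ballI)
  have "m * c0 < 2 * c0 + p" using multiples_below by (simp add: add_mult_distrib2)
  moreover have "4 * c0 \<le> m * c0" using m4 by simp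
  ultimately have "m * c0 < 2 * p" by linarith
  then have "c0 + t + g * r < p" using sums_below by (simp add: add_mult_distrib)
  moreover have "c + g * k \<le> c0 + t + g * r" if "c \<le> c0 + t" "k \<le> r" for c k
    using that by (simp add: add_mono)
  ultimately show "interval_translates g c0 t r \<subseteq> {..<p}"
    unfolding interval_translates_def by fastforce
next
  fix x y z assume "x \<in> interval_translates g c0 t r" "y \<in> interval_translates g c0 t r"
    "z \<in> interval_translates g c0 t r"
  then obtain c1 k1 c2 k2 c3 k3 where
    xyz: "x = c1 + g * k1" "y = c2 + g * k2" "z = c3 + g * k3" and
    c: "c0 \<le> c1" "c1 \<le> c0 + t" "c0 \<le> c2" "c2 \<le> c0 + t" "c0 \<le> c3" "c3 \<le> c0 + t" and
    k: "k1 \<le> r" "k2 \<le> r" "k3 \<le> r"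
    unfolding interval_translates_def by auto
  txt \<open>\<open>m z \<equiv> m c\<^sub>3 - e k\<^sub>3 (mod p)\<close>, and \<open>D\<close> is its distance above \<open>x + y\<close>.\<close>
  define S where "S = c1 + c2 + g * k1 + g * k2"
  define D :: int where "D = int (m * c3) - int (e * k3) - int S"
  have "g * k1 + g * k2 \<le> 2 * (g * r)" using k by (simp add: add_mono flip: add_mult_distrib2)
  then have S: "2 * c0 \<le> S" "S \<le> 2 * c0 + 2 * t + 2 * (g * r)" using c unfolding S_def by linarith+
  have "m * c0 \<le> m * c3" "m * c3 \<le> m * c0 + m * t" "e * k3 \<le> e * r"
    using c k by (simp_all flip: add_mult_distrib2)
  moreover have "2 * c0 + 2 * t + 2 * (g * r) + e * r < m * c0" "m * c0 + m * t < 2 * c0 + p"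
    using sums_below multiples_below by (simp_all add: algebra_simps)
  ultimately have "e * k3 + S < m * c3" "m * c3 < e * k3 + S + p" using S by linarith+
  then have "0 < D" "D < p" unfolding D_def by linarith+
  then have "\<not> int p dvd D" by (simp add: zdvd_not_zless)
  moreover have "int (m * z) - int (x + y) = D + int k3 * int p"
  proof -
    have "int p = int m * int g + int e" using p by (metis of_nat_add of_nat_mult)
    then show ?thesis unfolding D_def S_def xyz by (simp add: algebra_simps)
  qed
  ultimately have "\<not> int p dvd int (m * z) - int (x + y)" by simp
  then have "int (m * z) mod int p \<noteq> int (x + y) mod int p" unfolding mod_eq_dvd_iff .
  then show "(x + y) mod p \<noteq> (m * z) mod p" by (metis zmod_int)
qed

lemma exists_m_sum_free_interval_translates:
  fixes m p g e r R :: nat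
  assumes m4: "4 \<le> m" and p: "m * g + e = p" and e: "e < m" and g: "0 < g"
    and R: "R + (2 * g + e) * r + m \<le> p + 1"
  shows "\<exists>A. m_sum_free_mod m p A \<and> (r + 1) * R < (m + 2) * card A"
proof -
  define t where "t = R div (m + 2)"
  define w where "w = (2 * g + e) * r"
  define T where "T = 2 * t + w"
  define d where "d = m - 2"
  have d: "m = d + 2" "2 \<le> d" using m4 unfolding d_def by simp_all
  define c0 where "c0 = T div d + 1"
  have t_below: "(m + 2) * t \<le> R" unfolding t_def by (rule times_div_less_eq_dividend)
  have R_below: "R < (m + 2) * (t + 1)"
    unfolding t_def using dividend_less_times_div[of "m + 2" R] by simp
  have "T < d * c0" "d * c0 \<le> T + d"
    unfolding c0_def using dividend_less_times_div[of d T] d by simp_all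
  have "2 * c0 + 2 * t + w < m * c0"
    using \<open>T < d * c0\<close> unfolding T_def d by (simp add: algebra_simps)
  moreover have "m * (c0 + t) < 2 * c0 + p"
  proof -
    have "m * (c0 + t) = d * c0 + 2 * c0 + m * t" unfolding d by (simp add: algebra_simps)
    also have "\<dots> \<le> (m + 2) * t + w + d + 2 * c0"
      using \<open>d * c0 \<le> T + d\<close> unfolding T_def by (simp add: algebra_simps)
    also have "\<dots> < 2 * c0 + p" using t_below R d by (simp add: w_def)
    finally show ?thesis .
  qed
  moreover have "t < g"
  proof (rule ccontr)
    assume "\<not> t < g"
    then have "(m + 2) * g \<le> R" using t_below by (meson le_trans mult_le_mono2 not_less)
    moreover have "(m + 2) * g = m * g + 2 * g" by (simp add: algebra_simps)
    ultimately show False using R p e g by linarith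
  qed
  ultimately have "m_sum_free_mod m p (interval_translates g c0 t r)"
    "card (interval_translates g c0 t r) = (t + 1) * (r + 1)"
    using m_sum_free_interval_translates[OF m4 p] card_interval_translates unfolding w_def
    by simp_all
  moreover have "(r + 1) * R < (r + 1) * ((m + 2) * (t + 1))"
    using R_below by (rule mult_strict_left_mono) simp
  ultimately show ?thesis by (metis mult.commute mult.left_commute)
qed

lemma d_mod_ge_card:
  assumes "m_sum_free_mod m p A" and "0 < p"
  shows "real (card A) / real p \<le> d_mod m p"
proof -
  have "{A. m_sum_free_mod m p A} \<subseteq> Pow {..<p}" unfolding m_sum_free_mod_def by auto
  then have "finite {A. m_sum_free_mod m p A}" by (rule finite_subset) simp
  then show ?thesis unfolding d_mod_def using assms by (intro Max_ge) auto
qed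

lemma quarter_product_bound:
  fixes m :: int
  defines "q \<equiv> (m + 2) div 4"
  shows "m * (m + 2) + 8 * q - 3 \<le> 8 * q * (m + 2 - 2 * q)"
proof -
  define b where "b = (m + 2) mod 4"
  have m: "m = 4 * q + b - 2" unfolding q_def b_def by simp
  have "8 * q * (m + 2 - 2 * q) - (m * (m + 2) + 8 * q - 3) = (3 - b) * (b + 1)"
    unfolding m by (simp add: algebra_simps)
  moreover have "0 \<le> (3 - b) * (b + 1)" unfolding b_def by simp
  ultimately show ?thesis by linarith
qed

text \<open>The last factor is the room \<open>R\<close> left for the interval lengths in
  \<open>exists_m_sum_free_interval_translates\<close>, with \<open>g = p div m\<close>, \<open>e = p mod m\<close>,
  \<open>r = q - 1\<close>; the choice \<open>q = (m + 2) div 4\<close> nearly maximises \<open>q R\<close>.\<close>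

lemma interval_room_lower_bound:
  fixes m p q :: nat
  assumes m7: "7 \<le> m" and q: "q = (m + 2) div 4"
    and large: "8 * q * ((m - 2) * (p mod m) * (q - 1) + m * (m - 1)) \<le> p * (8 * q - 3)"
  shows "int p * (int m * (int m + 2))
    \<le> 8 * int q * (int m * (int p + 1 - (2 * int (p div m) + int (p mod m)) * (int q - 1) - int m))"
proof -
  define g e where "g = p div m" and "e = p mod m"
  have q2: "2 \<le> q" using m7 q by linarith
  define E :: int where "E = (int m - 2) * int e * (int q - 1) + int m * (int m - 1)"
  have "int (8 * q * ((m - 2) * e * (q - 1) + m * (m - 1))) \<le> int (p * (8 * q - 3))"
    using large unfolding e_def by (simp only: of_nat_le_iff)
  then have "8 * int q * E \<le> int p * (8 * int q - 3)"
    using m7 q2 unfolding E_def by (simp add: of_nat_diff)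
  moreover have "int p * (int m * (int m + 2) + 8 * int q - 3)
      \<le> int p * (8 * int q * (int m + 2 - 2 * int q))"
  proof -
    have "int q = (int m + 2) div 4" unfolding q zdiv_int by simp
    then show ?thesis using quarter_product_bound[of "int m"] by (intro mult_left_mono) simp_all
  qed
  moreover have "8 * int q * (int m * (int p + 1 - (2 * int g + int e) * (int q - 1) - int m))
      = int p * (8 * int q * (int m + 2 - 2 * int q)) - 8 * int q * E"
  proof -
    have "int p = int m * int g + int e" unfolding g_def e_def
      by (metis div_mult_mod_eq mult.commute of_nat_add of_nat_mult)
    then show ?thesis unfolding E_def by (simp add: algebra_simps)
  qed
  ultimately show ?thesis unfolding g_def e_def by (simp add: algebra_simps)
qed

lemma exists_m_sum_free_dense:
  fixes m p q :: nat
  assumes m7: "7 \<le> m" and q: "q = (m + 2) div 4"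
    and large: "8 * q * ((m - 2) * (p mod m) * (q - 1) + m * (m - 1)) \<le> p * (8 * q - 3)"
  shows "\<exists>A. m_sum_free_mod m p A \<and> p < 8 * card A"
proof -
  define g e where "g = p div m" and "e = p mod m"
  have p: "m * g + e = p" and "e < m" unfolding g_def e_def using m7 by simp_all
  have q2: "2 \<le> q" using m7 q by linarith
  define Ri :: int where "Ri = int p + 1 - (2 * int g + int e) * (int q - 1) - int m"
  have key: "int p * (int m * (int m + 2)) \<le> 8 * int q * (int m * Ri)"
    using interval_room_lower_bound[OF assms] unfolding Ri_def g_def e_def .
  have "0 < 8 * q * ((m - 2) * e * (q - 1) + m * (m - 1))" using m7 q2 by simp
  then have "0 < p * (8 * q - 3)" using large unfolding e_def by (rule less_le_trans)
  then have "0 < int p * (int m * (int m + 2))" using m7 by simp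
  then have "0 < 8 * int q * (int m * Ri)" using key by linarith
  then have "0 < Ri" using m7 q2 by (simp add: zero_less_mult_iff)
  define R where "R = nat Ri"
  have Ri_R: "Ri = int R" using \<open>0 < Ri\<close> unfolding R_def by simp
  have "int (R + (2 * g + e) * (q - 1) + m) = int (p + 1)"
    using q2 Ri_def unfolding Ri_R by (simp add: of_nat_diff)
  then have R: "R + (2 * g + e) * (q - 1) + m \<le> p + 1" by (simp only: of_nat_eq_iff)
  have "0 < g"
    using R \<open>0 < Ri\<close> m7 unfolding Ri_R g_def by (simp add: div_greater_zero_iff)
  then obtain A where A: "m_sum_free_mod m p A" "(q - 1 + 1) * R < (m + 2) * card A"
    using exists_m_sum_free_interval_translates[OF _ p \<open>e < m\<close> _ R] m7 by auto
  then have "q * R < (m + 2) * card A" using q2 by simp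
  then have "int (q * R) < int ((m + 2) * card A)" by (simp only: of_nat_less_iff)
  then have "int q * Ri < (int m + 2) * int (card A)" unfolding Ri_R by (simp add: distrib_right)
  then have "(8 * int m) * (int q * Ri) < (8 * int m) * ((int m + 2) * int (card A))"
    using m7 by (intro mult_strict_left_mono) simp_all
  then have "int p * (int m * (int m + 2)) < int (8 * card A) * (int m * (int m + 2))"
    using key by (simp add: algebra_simps)
  then have "int p < int (8 * card A)"
    using m7 mult_less_cancel_right_pos[of "int m * (int m + 2)"] by simp
  then have "p < 8 * card A" by (simp only: of_nat_less_iff)
  with A show ?thesis by blast
qed

lemma one_eighth_le_d_mod:
  fixes m p q :: nat
  assumes "7 \<le> m" and "q = (m + 2) div 4"
    and "8 * q * ((m - 2) * (p mod m) * (q - 1) + m * (m - 1)) \<le> p * (8 * q - 3)"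
  shows "1 / 8 \<le> d_mod m p"
proof -
  obtain A where A: "m_sum_free_mod m p A" "p < 8 * card A"
    using exists_m_sum_free_dense[OF assms] by blast
  then have "A \<noteq> {}" "A \<subseteq> {..<p}" unfolding m_sum_free_mod_def by auto
  then have "0 < p" by auto
  have "1 / 8 \<le> real (card A) / real p"
    using A(2) \<open>0 < p\<close> by (simp add: field_simps)
  also have "\<dots> \<le> d_mod m p" using d_mod_ge_card[OF A(1) \<open>0 < p\<close>] .
  finally show ?thesis .
qed

lemma one_eighth_le_d_mod_if_mod_eq_1:
  fixes m p :: nat
  assumes m7: "7 \<le> m" and "p mod m = 1" and p: "4 * m ^ 2 \<le> p"
  shows "1 / 8 \<le> d_mod m p"
proof (rule one_eighth_le_d_mod[OF m7 refl])
  define q where "q = (m + 2) div 4"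
  have q2: "2 \<le> q" and "q \<le> m" using m7 unfolding q_def by linarith+
  have "(m - 2) * 1 * (q - 1) \<le> m * m" "m * (m - 1) \<le> m * m"
    using \<open>q \<le> m\<close> by (simp_all add: mult_le_mono)
  then have "(m - 2) * 1 * (q - 1) + m * (m - 1) \<le> 2 * (m * m)"
    unfolding mult_2 by (rule add_mono)
  then have "8 * q * ((m - 2) * 1 * (q - 1) + m * (m - 1)) \<le> 8 * q * (2 * (m * m))"
    by (rule mult_le_mono2)
  also have "\<dots> \<le> 4 * m ^ 2 * (8 * q - 3)"
  proof -
    have "4 * q \<le> 8 * q - 3" using q2 by linarith
    then show ?thesis by (simp add: power2_eq_square)
  qed
  also have "\<dots> \<le> p * (8 * q - 3)" using p by simp
  finally show "8 * q * ((m - 2) * (p mod m) * (q - 1) + m * (m - 1)) \<le> p * (8 * q - 3)"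
    unfolding q_def \<open>p mod m = 1\<close> .
qed

lemma one_eighth_le_d_mod_if_large:
  fixes m p :: nat
  assumes m7: "7 \<le> m" and p: "m ^ 4 \<le> p"
  shows "1 / 8 \<le> d_mod m p"
proof (rule one_eighth_le_d_mod[OF m7 refl])
  define q where "q = (m + 2) div 4"
  have q2: "2 \<le> q" and "4 * q \<le> m + 2" using m7 unfolding q_def by linarith+
  have "16 * (q * q) \<le> (m + 2) * (m + 2)"
    using mult_le_mono[OF \<open>4 * q \<le> m + 2\<close> \<open>4 * q \<le> m + 2\<close>] by simp
  also have "\<dots> \<le> 2 * (m * m)"
  proof -
    have "7 * m \<le> m * m" "(m + 2) * (m + 2) = m * m + 4 * m + 4"
      using m7 by (simp_all add: algebra_simps)
    then show ?thesis using m7 by linarith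
  qed
  finally have qq: "8 * (q * q) \<le> m * m" by simp
  have "(m - 2) * (p mod m) * (q - 1) \<le> m * m * (q - 1)"
    using m7 by (intro mult_le_mono) (simp_all add: less_imp_le)
  moreover have "m * (m - 1) \<le> m * m" by simp
  ultimately have "(m - 2) * (p mod m) * (q - 1) + m * (m - 1) \<le> m * m * (q - 1) + m * m"
    by (rule add_mono)
  also have "\<dots> = m * m * q" using q2 by (simp add: diff_mult_distrib2)
  finally have "(m - 2) * (p mod m) * (q - 1) + m * (m - 1) \<le> m * m * q" .
  then have "8 * q * ((m - 2) * (p mod m) * (q - 1) + m * (m - 1)) \<le> 8 * q * (m * m * q)"
    by (rule mult_le_mono2)
  also have "\<dots> = m * m * (8 * (q * q))" by (simp add: algebra_simps)
  also have "\<dots> \<le> m ^ 4" using qq by (simp add: power4_eq_xxxx mult_le_mono2 algebra_simps)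
  also have "\<dots> \<le> p" using p .
  also have "\<dots> \<le> p * (8 * q - 3)" using q2 by (simp add: Suc_le_eq)
  finally show "8 * q * ((m - 2) * (p mod m) * (q - 1) + m * (m - 1)) \<le> p * (8 * q - 3)"
    unfolding q_def .
qed

lemma primes_at_top_neq_bot: "primes_at_top \<noteq> bot"
proof
  assume "primes_at_top = bot"
  then have "eventually (\<lambda>_. False) primes_at_top" by simp
  then have "eventually (\<lambda>p. \<not> prime p) sequentially"
    unfolding primes_at_top_def eventually_inf_principal by simp
  then obtain N :: nat where "\<forall>p\<ge>N. \<not> prime p" unfolding eventually_sequentially by blast
  moreover obtain p where "prime p" "N < p" using bigger_prime by blast
  ultimately show False by auto
qed

theorem lemma3p1:
  fixes m :: nat
  assumes "m \<ge> 7"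
  shows "(\<forall>p n::nat. prime p \<and> n > 0 \<and> p = 4 * m^2 * n + 1 \<longrightarrow>
            d_mod m p \<ge> (1/8) * (1 - 1 / real p))
       \<and> (\<forall>L::real. (d_mod m \<longlongrightarrow> L) primes_at_top \<longrightarrow> L \<ge> 1/8)"
proof (intro conjI allI impI)
  fix p n :: nat
  assume "prime p \<and> n > 0 \<and> p = 4 * m^2 * n + 1"
  then have p: "p = 4 * m^2 * n + 1" and "0 < n" by auto
  have "4 * m ^ 2 * 1 \<le> 4 * m ^ 2 * n" using \<open>0 < n\<close> by (intro mult_le_mono2) simp
  then have "4 * m ^ 2 \<le> p" unfolding p by linarith
  moreover have "p mod m = 1"
  proof -
    have "p = 1 + m * (4 * m * n)" unfolding p by (simp add: power2_eq_square algebra_simps)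
    then have "p mod m = 1 mod m" by (simp only: mod_mult_self2)
    then show ?thesis using assms by simp
  qed
  ultimately have "1 / 8 \<le> d_mod m p" using one_eighth_le_d_mod_if_mod_eq_1 assms by blast
  moreover have "(1 / 8) * (1 - 1 / real p) \<le> 1 / 8" by simp
  ultimately show "(1 / 8) * (1 - 1 / real p) \<le> d_mod m p" by linarith
next
  fix L :: real
  assume "(d_mod m \<longlongrightarrow> L) primes_at_top"
  moreover have "eventually (\<lambda>p. 1 / 8 \<le> d_mod m p) primes_at_top"
    unfolding primes_at_top_def eventually_inf_principal eventually_sequentially
    using one_eighth_le_d_mod_if_large[OF assms] by blast
  ultimately show "1 / 8 \<le> L" using tendsto_lowerbound primes_at_top_neq_bot by blast
qed

end
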